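(* Let $\gamma_*>0$ and let $\Phi$ denote the standard normal CDF. Define \[ t_+=\tfrac32\gamma_*+\tfrac{1}{\gamma_*}\log\left(1-\sqrt{1-e^{-\gamma_*}}\right),\qquad t_-=\tfrac32\gamma_*+\tfrac{1}{\gamma_*}\log\left(1+\sqrt{1-e^{-\gamma_*}}\right), \] and for $x\ne2\gamma_*$ \[ h(x)=\frac{\Phi(t_--x)-\Phi(t_--2\gamma_* )}{\Phi(t_+-x)-\Phi(t_+-2\gamma_* )}. \] Let $k=e^{-\frac12(t_--2\gamma_* )^2+\frac12(t_+-2\gamma_* )^2}$ and $c=\frac{k}{1+k}$. Then $\lim_{x\to2\gamma_*}h(x)=k$, $c\in(0,1)$, and \[ h(x)\le\frac{c}{1-c}\ \text{ if } x<2\gamma_*,\qquad h(x)\ge\frac{c}{1-c}\ \text{ if } x>2\gamma_*. \] *)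

theory Defs
  imports "HOL-Probability.Probability"
begin

definition Phi :: "real \<Rightarrow> real" where
  "Phi x = cdf (density lborel std_normal_density) x"

definition t_plus :: "real \<Rightarrow> real" where
  "t_plus g = 3/2 * g + (1/g) * ln (1 - sqrt (1 - exp (-g)))"

definition t_minus :: "real \<Rightarrow> real" where
  "t_minus g = 3/2 * g + (1/g) * ln (1 + sqrt (1 - exp (-g)))"

definition h_fun :: "real \<Rightarrow> real \<Rightarrow> real" where
  "h_fun g x = (Phi (t_minus g - x) - Phi (t_minus g - 2*g)) /
               (Phi (t_plus g - x) - Phi (t_plus g - 2*g))"

definition k_const :: "real \<Rightarrow> real" where
  "k_const g = exp (- (1/2) * (t_minus g - 2*g)^2 + (1/2) * (t_plus g - 2*g)^2)"

definition c_const :: "real \<Rightarrow> real" where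
  "c_const g = k_const g / (1 + k_const g)"

end

theory Submission
  imports Defs
begin

text \<open>Write \<phi> for the standard normal density and let a > b. Completing the square gives
  \<phi>(a + v) = k exp (- (a - b) v) \<phi>(b + v) with k = \<phi> a / \<phi> b, so v \<mapsto> \<Phi>(a + v) - k \<Phi>(b + v)
  increases for v \<le> 0 and decreases for v \<ge> 0; hence \<Phi>(a + u) - \<Phi> a \<le> k (\<Phi>(b + u) - \<Phi> b)
  for all u. Dividing by the second increment, which has the sign of u, bounds the ratio of the
  increments from above for u > 0 and from below for u < 0, and the ratio tends to k as u \<rightarrow> 0
  because \<Phi>' = \<phi>. With a = t_- - 2\<gamma>, b = t_+ - 2\<gamma> and u = 2\<gamma> - x the ratio is h(x); here a > b
  since t_- > t_+, the constant k of the theorem is \<phi> a / \<phi> b, and c / (1 - c) = k.\<close>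

lemma Phi_eq_add_integral:
  assumes "x \<le> y"
  shows "Phi y = Phi x + integral {x..y} std_normal_density"
proof (cases "x = y")
  case False
  with assms have "x < y" by simp
  interpret real_distribution "density lborel std_normal_density"
    using real_dist_normal_dist .
  have "Phi y - Phi x = measure (density lborel std_normal_density) {x<..y}"
    unfolding Phi_def using cdf_diff_eq[OF \<open>x < y\<close>] .
  also have "\<dots> = integral\<^sup>L (density lborel std_normal_density) (indicator {x<..y})"
    by (simp add: emeasure_eq_measure)
  also have "\<dots> = integral\<^sup>L lborel (\<lambda>t. std_normal_density t *\<^sub>R indicator {x<..y} t)"
    by (rule integral_density) auto
  also have "\<dots> = (LINT t:{x<..y}|lborel. std_normal_density t)"
    unfolding set_lebesgue_integral_def by (simp add: mult.commute)
  also have "\<dots> = integral {x<..y} std_normal_density"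
    by (rule set_borel_integral_eq_integral, unfold set_integrable_def,
        rule integrable_mult_indicator) auto
  also have "\<dots> = integral {x..y} std_normal_density"
    by (rule integral_spike_set) (auto intro: negligible_subset[of "{x}"])
  finally show ?thesis by simp
qed simp

lemma continuous_on_std_normal_density: "continuous_on S std_normal_density"
  unfolding std_normal_density_def by (intro continuous_intros) auto

lemma Phi_has_real_derivative: "(Phi has_real_derivative std_normal_density x) (at x)"
proof -
  have "((\<lambda>u. integral {x - 1..u} std_normal_density) has_real_derivative std_normal_density x)
      (at x within {x - 1..x + 1})"
    by (rule integral_has_real_derivative) (auto simp: continuous_on_std_normal_density)
  then have "((\<lambda>u. Phi (x - 1) + integral {x - 1..u} std_normal_density)
      has_real_derivative std_normal_density x) (at x)"
    using at_within_Icc_at[of "x - 1" x "x + 1"] by (auto intro!: derivative_eq_intros)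
  then show ?thesis
    by (rule has_field_derivative_transform_within_open[where S = "{x - 1<..<x + 1}"])
       (auto intro!: Phi_eq_add_integral[symmetric])
qed

lemma strict_mono_Phi: "strict_mono Phi"
  by (rule strict_monoI, rule DERIV_pos_imp_increasing)
     (auto intro!: Phi_has_real_derivative normal_density_pos)

lemma std_normal_density_shift:
  "std_normal_density (a + v)
     = std_normal_density a / std_normal_density b * exp (- (a - b) * v) * std_normal_density (b + v)"
proof -
  have "- (a + v)\<^sup>2 / 2 = (- a\<^sup>2 / 2 - - b\<^sup>2 / 2) + - (a - b) * v + - (b + v)\<^sup>2 / 2"
    by (simp add: power2_eq_square field_simps)
  then have "exp (- (a + v)\<^sup>2 / 2)
      = exp (- a\<^sup>2 / 2) / exp (- b\<^sup>2 / 2) * exp (- (a - b) * v) * exp (- (b + v)\<^sup>2 / 2)"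
    by (simp only: exp_add exp_diff)
  then show ?thesis
    unfolding std_normal_density_def by simp
qed

lemma Phi_increment_le:
  fixes a b u :: real
  assumes "b < a"
  defines "k \<equiv> std_normal_density a / std_normal_density b"
  shows "Phi (a + u) - Phi a \<le> k * (Phi (b + u) - Phi b)"
proof -
  define F where "F v = Phi (a + v) - k * Phi (b + v)" for v
  have F_deriv: "(F has_real_derivative std_normal_density (a + v) - k * std_normal_density (b + v)) (at v)"
    for v
    unfolding F_def by (auto intro!: derivative_eq_intros DERIV_chain2[OF Phi_has_real_derivative])
  have F_deriv_eq: "std_normal_density (a + v) - k * std_normal_density (b + v)
      = k * std_normal_density (b + v) * (exp (- (a - b) * v) - 1)" for v
    unfolding std_normal_density_shift[of a v b] k_def by (simp add: right_diff_distrib diff_divide_distrib mult_ac)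
  have k_nonneg: "0 \<le> k * std_normal_density (b + v)" for v
    by (simp add: k_def)
  have "F u \<le> F 0"
  proof (cases "0 \<le> u")
    case True
    show ?thesis
    proof (rule DERIV_nonpos_imp_nonincreasing[OF True])
      fix v :: real assume "0 \<le> v"
      then have "exp (- (a - b) * v) \<le> 1"
        using assms by (simp add: mult_nonpos_nonneg)
      then show "\<exists>y. (F has_real_derivative y) (at v) \<and> y \<le> 0"
        using F_deriv F_deriv_eq k_nonneg by (metis diff_le_0_iff_le mult_nonneg_nonpos)
    qed
  next
    case False
    show ?thesis
    proof (rule DERIV_nonneg_imp_nondecreasing[of u 0 F])
      show "u \<le> 0" using False by simp
      fix v :: real assume "u \<le> v" "v \<le> 0"
      then have "1 \<le> exp (- (a - b) * v)"
        using assms by (simp add: mult_nonpos_nonpos)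
      then show "\<exists>y. (F has_real_derivative y) (at v) \<and> 0 \<le> y"
        using F_deriv F_deriv_eq k_nonneg by (metis diff_ge_0_iff_ge mult_nonneg_nonneg)
    qed
  qed
  then show ?thesis
    unfolding F_def by (simp add: algebra_simps)
qed

definition Phi_increment_ratio :: "real \<Rightarrow> real \<Rightarrow> real \<Rightarrow> real" where
  "Phi_increment_ratio a b u = (Phi (a + u) - Phi a) / (Phi (b + u) - Phi b)"

lemma Phi_increment_ratio_le:
  assumes "b < a" and "0 < u"
  shows "Phi_increment_ratio a b u \<le> std_normal_density a / std_normal_density b"
proof -
  have "0 < Phi (b + u) - Phi b"
    using strict_monoD[OF strict_mono_Phi, of b "b + u"] assms(2) by simp
  with Phi_increment_le[OF assms(1), of u] show ?thesis
    unfolding Phi_increment_ratio_def by (simp add: pos_divide_le_eq)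
qed

lemma Phi_increment_ratio_ge:
  assumes "b < a" and "u < 0"
  shows "std_normal_density a / std_normal_density b \<le> Phi_increment_ratio a b u"
proof -
  have "Phi (b + u) - Phi b < 0"
    using strict_monoD[OF strict_mono_Phi, of "b + u" b] assms(2) by simp
  with Phi_increment_le[OF assms(1), of u] show ?thesis
    unfolding Phi_increment_ratio_def by (simp add: neg_le_divide_eq mult.commute)
qed

lemma Phi_difference_quotient_tendsto:
  "((\<lambda>u. (Phi (a + u) - Phi a) / u) \<longlongrightarrow> std_normal_density a) (at 0)"
  using Phi_has_real_derivative[of a] unfolding DERIV_def by simp

lemma Phi_increment_ratio_tendsto:
  "(Phi_increment_ratio a b \<longlongrightarrow> std_normal_density a / std_normal_density b) (at 0)"
proof -
  have "((\<lambda>u. ((Phi (a + u) - Phi a) / u) / ((Phi (b + u) - Phi b) / u))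
      \<longlongrightarrow> std_normal_density a / std_normal_density b) (at 0)"
    using normal_density_pos[of 1 0 b]
    by (intro tendsto_divide Phi_difference_quotient_tendsto) auto
  moreover have "\<forall>\<^sub>F u in at 0. ((Phi (a + u) - Phi a) / u) / ((Phi (b + u) - Phi b) / u)
      = Phi_increment_ratio a b u"
    unfolding eventually_at_filter Phi_increment_ratio_def by simp
  ultimately show ?thesis
    by (rule Lim_transform_eventually)
qed

lemma t_plus_less_t_minus:
  assumes "0 < g"
  shows "t_plus g < t_minus g"
proof -
  have s: "0 < sqrt (1 - exp (- g))" "sqrt (1 - exp (- g)) < 1"
    using assms by (simp_all add: real_sqrt_less_iff)
  have "ln (1 - sqrt (1 - exp (- g))) < ln (1 + sqrt (1 - exp (- g)))"
    by (rule ln_less_cancel_iff[THEN iffD2]) (use s in linarith)+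
  with assms show ?thesis
    unfolding t_plus_def t_minus_def by (simp add: divide_strict_right_mono)
qed

lemma h_fun_eq_Phi_increment_ratio:
  "h_fun g x = Phi_increment_ratio (t_minus g - 2 * g) (t_plus g - 2 * g) (2 * g - x)"
  unfolding h_fun_def Phi_increment_ratio_def by simp

lemma k_const_eq_density_ratio:
  "k_const g = std_normal_density (t_minus g - 2 * g) / std_normal_density (t_plus g - 2 * g)"
  unfolding k_const_def std_normal_density_def by (simp add: exp_diff[symmetric])

theorem lemma7:
  fixes \<gamma> :: real
  assumes "\<gamma> > 0"
  shows "(h_fun \<gamma> \<longlongrightarrow> k_const \<gamma>) (at (2*\<gamma>))
         \<and> 0 < c_const \<gamma> \<and> c_const \<gamma> < 1
         \<and> (\<forall>x. x < 2*\<gamma> \<longrightarrow> h_fun \<gamma> x \<le> c_const \<gamma> / (1 - c_const \<gamma>))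
         \<and> (\<forall>x. x > 2*\<gamma> \<longrightarrow> h_fun \<gamma> x \<ge> c_const \<gamma> / (1 - c_const \<gamma>))"
proof -
  define a b where "a = t_minus \<gamma> - 2 * \<gamma>" and "b = t_plus \<gamma> - 2 * \<gamma>"
  have "b < a"
    using t_plus_less_t_minus[OF assms] by (simp add: a_def b_def)
  have h_eq: "h_fun \<gamma> x = Phi_increment_ratio a b (2 * \<gamma> - x)" for x
    unfolding a_def b_def by (rule h_fun_eq_Phi_increment_ratio)
  have k_eq: "k_const \<gamma> = std_normal_density a / std_normal_density b"
    unfolding a_def b_def by (rule k_const_eq_density_ratio)
  have "0 < k_const \<gamma>"
    by (simp add: k_const_def)
  then have c_bounds: "0 < c_const \<gamma> \<and> c_const \<gamma> < 1" and c_odds: "c_const \<gamma> / (1 - c_const \<gamma>) = k_const \<gamma>"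
    unfolding c_const_def by (simp_all add: field_simps)
  have "filterlim (\<lambda>x. 2 * \<gamma> - x) (at 0) (at (2 * \<gamma>))"
    unfolding filterlim_at eventually_at_filter by (auto intro!: tendsto_eq_intros)
  then have "(h_fun \<gamma> \<longlongrightarrow> k_const \<gamma>) (at (2 * \<gamma>))"
    unfolding h_eq k_eq by (rule filterlim_compose[OF Phi_increment_ratio_tendsto])
  moreover have "\<forall>x. x < 2 * \<gamma> \<longrightarrow> h_fun \<gamma> x \<le> k_const \<gamma>"
    unfolding h_eq k_eq using Phi_increment_ratio_le[OF \<open>b < a\<close>] by simp
  moreover have "\<forall>x. x > 2 * \<gamma> \<longrightarrow> h_fun \<gamma> x \<ge> k_const \<gamma>"
    unfolding h_eq k_eq using Phi_increment_ratio_ge[OF \<open>b < a\<close>] by simp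
  ultimately show ?thesis
    using c_bounds c_odds by simp
qed

end
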